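(* Let $m$ be a positive integer, let $\lambda$ be the real root of $x^3-mx^2-1$, and let $K=\mathbb{Q}(\lambda)$. Then $\left(\frac{1}{1+\lambda+\lambda^2},\frac{\lambda}{1+\lambda+\lambda^2}\right)$ is a periodic point of $T_{K,5/2}$, i.e. it lies in $\Delta_K$ and there exist positive integers $m_1\neq n_1$ with $T_{K,5/2}^{m_1}\left(\frac{1}{1+\lambda+\lambda^2},\frac{\lambda}{1+\lambda+\lambda^2}\right)=T_{K,5/2}^{n_1}\left(\frac{1}{1+\lambda+\lambda^2},\frac{\lambda}{1+\lambda+\lambda^2}\right)$.
   Context: Let $K\subset\mathbb{R}$ be a real cubic number field, $N=N_{K/\mathbb{Q}}$ its norm, and $r=5/2$. Let $\Delta_K=\{(\alpha,\beta)\in K^2:\ 1,\alpha,\beta \text{ linearly independent over }\mathbb{Q},\ \alpha,\beta>0,\ \alpha+\beta<1\}$ and $Ind=\{(i,j): i,j\in\{0,1,2\},\ i\neq j\}$. Let $\Delta=\{(x,y)\in\mathbb{R}^2: x,y\ge 0,\ x+y\le 1\}$ and $\triangle(1,2)=\{(x,y)\in\Delta: x\ge y\}$, $\triangle(2,1)=\{x\le y\}$, $\triangle(0,1)=\{2x+y-1\le 0\}$, $\triangle(1,0)=\{2x+y-1\ge 0\}$, $\triangle(0,2)=\{x+2y-1\le0\}$, $\triangle(2,0)=\{x+2y-1\ge 0\}$ (all subsets of $\Delta$). Maps $T_{(i,j)}:\triangle(i,j)\to\Delta$: $T_{(1,2)}(x,y)=(\frac{x-y}{1-y},\frac{y}{1-y})$,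 $T_{(2,1)}(x,y)=(\frac{x}{1-x},\frac{y-x}{1-x})$, $T_{(0,1)}(x,y)=(\frac{x}{1-x},\frac{y}{1-x})$, $T_{(1,0)}(x,y)=(\frac{2x+y-1}{x+y},\frac{y}{x+y})$, $T_{(0,2)}(x,y)=(\frac{x}{1-y},\frac{y}{1-y})$, $T_{(2,0)}(x,y)=(\frac{x}{x+y},\frac{x+2y-1}{x+y})$. For $(\alpha,\beta)\in\Delta_K$ put $\gamma=1-\alpha-\beta$ and $v_{\{1,2\}}=\frac{\alpha^r\beta^r}{|N(\alpha)N(\beta)|}$, $v_{\{0,1\}}=\frac{\alpha^r\gamma^r}{|N(\alpha)N(\gamma)|}$, $v_{\{0,2\}}=\frac{\beta^r\gamma^r}{|N(\beta)N(\gamma)|}$; the maximum is attained at a unique pair $\{i_0,j_0\}$. $\varepsilon(\alpha,\beta)$ is the ordered pair $(i,j)\in Ind$ with $\{i,j\}=\{i_0,j_0\}$ and $(\alpha,\beta)\in\triangle(i,j)$, and $T_{K,5/2}(\alpha,\beta)=T_{\varepsilon(\alpha,\beta)}(\alpha,\beta)$ (a map $\Delta_K\to\Delta_K$). *)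

theory Defs
  imports Complex_Main
begin

definition cubic_field :: "real \<Rightarrow> real set" where
  "cubic_field lam = {x. \<exists>a b c. a \<in> \<rat> \<and> b \<in> \<rat> \<and> c \<in> \<rat> \<and> x = a + b*lam + c*lam^2}"

definition coords :: "real \<Rightarrow> real \<Rightarrow> real \<times> real \<times> real" where
  "coords lam x = (THE (a,b,c). a \<in> \<rat> \<and> b \<in> \<rat> \<and> c \<in> \<rat> \<and> x = a + b*lam + c*lam^2)"

definition det3 :: "real \<times> real \<times> real \<Rightarrow> real \<times> real \<times> real \<Rightarrow> real \<times> real \<times> real \<Rightarrow> real" where
  "det3 u v w = (case u of (u1,u2,u3) \<Rightarrow> case v of (v1,v2,v3) \<Rightarrow> case w of (w1,w2,w3) \<Rightarrow>
      u1*(v2*w3 - v3*w2) - v1*(u2*w3 - u3*w2) + w1*(u2*v3 - u3*v2))"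

text \<open>Field norm N_{K/Q}(x): determinant of the Q-linear map y \<mapsto> x*y on K,
 written in the basis 1, lam, lam^2 (columns = coordinates of x, x*lam, x*lam^2).\<close>
definition field_norm :: "real \<Rightarrow> real \<Rightarrow> real" where
  "field_norm lam x = det3 (coords lam x) (coords lam (x*lam)) (coords lam (x*lam^2))"

definition DeltaK :: "real set \<Rightarrow> (real \<times> real) set" where
  "DeltaK K = {(\<alpha>,\<beta>). \<alpha> \<in> K \<and> \<beta> \<in> K \<and>
     (\<forall>p q s. p \<in> \<rat> \<and> q \<in> \<rat> \<and> s \<in> \<rat> \<and> p + q*\<alpha> + s*\<beta> = 0 \<longrightarrow> p = 0 \<and> q = 0 \<and> s = 0) \<and>
     \<alpha> > 0 \<and> \<beta> > 0 \<and> \<alpha> + \<beta> < 1}"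

fun tri :: "nat \<times> nat \<Rightarrow> real \<times> real \<Rightarrow> bool" where
  "tri (i,j) (x,y) = (x \<ge> 0 \<and> y \<ge> 0 \<and> x + y \<le> 1 \<and>
     (if (i,j) = (1,2) then x \<ge> y
      else if (i,j) = (2,1) then x \<le> y
      else if (i,j) = (0,1) then 2*x + y - 1 \<le> 0
      else if (i,j) = (1,0) then 2*x + y - 1 \<ge> 0
      else if (i,j) = (0,2) then x + 2*y - 1 \<le> 0
      else if (i,j) = (2,0) then x + 2*y - 1 \<ge> 0
      else False))"

fun Tmap :: "nat \<times> nat \<Rightarrow> real \<times> real \<Rightarrow> real \<times> real" where
  "Tmap (i,j) (x,y) =
     (if (i,j) = (1,2) then ((x - y)/(1 - y), y/(1 - y))
      else if (i,j) = (2,1) then (x/(1 - x), (y - x)/(1 - x))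
      else if (i,j) = (0,1) then (x/(1 - x), y/(1 - x))
      else if (i,j) = (1,0) then ((2*x + y - 1)/(x + y), y/(x + y))
      else if (i,j) = (0,2) then (x/(1 - y), y/(1 - y))
      else (x/(x + y), (x + 2*y - 1)/(x + y)))"

text \<open>The selection epsilon(alpha,beta) for parameter r and norm N: first the pair
 {i0,j0} maximising v, then the ordering (i,j) with (alpha,beta) in triangle(i,j).
 (The maximum is unique on Delta_K, so tie-breaking is immaterial.)\<close>
definition eps :: "(real \<Rightarrow> real) \<Rightarrow> real \<Rightarrow> real \<times> real \<Rightarrow> nat \<times> nat" where
  "eps N r p = (case p of (\<alpha>,\<beta>) \<Rightarrow>
     let \<gamma> = 1 - \<alpha> - \<beta>;
         v12 = \<alpha> powr r * \<beta> powr r / \<bar>N \<alpha> * N \<beta>\<bar>;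
         v01 = \<alpha> powr r * \<gamma> powr r / \<bar>N \<alpha> * N \<gamma>\<bar>;
         v02 = \<beta> powr r * \<gamma> powr r / \<bar>N \<beta> * N \<gamma>\<bar>
     in if v12 \<ge> v01 \<and> v12 \<ge> v02 then (if tri (1,2) p then (1,2) else (2,1))
        else if v01 \<ge> v02 then (if tri (0,1) p then (0,1) else (1,0))
        else (if tri (0,2) p then (0,2) else (2,0)))"

definition T_K :: "(real \<Rightarrow> real) \<Rightarrow> real \<Rightarrow> real \<times> real \<Rightarrow> real \<times> real" where
  "T_K N r p = Tmap (eps N r p) p"

end

theory Submission
  imports Defs
begin

text \<open>Write a point of \<open>\<Delta>\<close> in homogeneous coordinates \<open>(a : b : c)\<close>, so that
  \<open>\<alpha> : \<beta> : \<gamma> = a : b : c\<close>. Each branch of \<open>T\<close> then subtracts one coordinate from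
  another, and since the norm is multiplicative the selection \<open>\<epsilon>\<close> only compares the
  weights \<open>(xy)\<^sup>r / |N(x) N(y)|\<close> of pairs of coordinates. Starting from
  \<open>(1 : \<lambda> : \<lambda>\<^sup>2)\<close>, the coordinates are the units \<open>1, \<lambda>\<close> and \<open>c\<^sub>j = \<lambda>\<^sup>2 - j\<lambda>\<close>
  with \<open>N(c\<^sub>j) = 1 + j\<^sup>2(m - j) < c\<^sub>j\<^sup>r\<close>, so the pair \<open>{\<lambda>, c\<^sub>j}\<close> always wins and
  \<open>\<lambda>\<close> is subtracted from \<open>c\<^sub>j\<close>, for \<open>m\<close> steps. Then \<open>c\<^sub>m = 1/\<lambda>\<close>, and rescaling
  by \<open>\<lambda>\<close> shows that the coordinates have been permuted cyclically; after \<open>3m\<close> steps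
  the orbit is back at its starting point. The argument works for every \<open>r \<ge> 2\<close>.\<close>

section \<open>The cubic field \<open>\<rat>(\<lambda>)\<close>\<close>

lemma rational_root_of_monic_int_cubic:
  fixes x :: real and A B C :: int
  assumes "x \<in> \<rat>" "x^3 + of_int A * x^2 + of_int B * x + of_int C = 0"
  shows "x \<in> \<int>"
proof -
  from assms(1) obtain p q :: int
    where q: "q > 0" and x: "x = of_int p / of_int q" and cop: "coprime p q"
    by (rule Rats_cases') blast
  have xq: "x * of_int q = of_int p" using q x by simp
  have "(of_int q)^3 * (x^3 + of_int A * x^2 + of_int B * x + of_int C)
      = (x * of_int q)^3 + of_int A * (x * of_int q)^2 * of_int q
        + of_int B * (x * of_int q) * (of_int q)^2 + of_int C * (of_int q)^3"
    by (simp add: algebra_simps power2_eq_square power3_eq_cube)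
  hence "(of_int (p^3 + A * p^2 * q + B * p * q^2 + C * q^3) :: real) = 0"
    using assms(2) unfolding xq by simp
  hence "p^3 = q * (- A * p^2 - B * p * q - C * q^2)"
    by (simp only: of_int_eq_0_iff) (simp add: algebra_simps power2_eq_square power3_eq_cube)
  hence "q dvd p^3" by simp
  moreover have "coprime q (p^3)" using cop by (simp add: coprime_commute)
  ultimately have "is_unit q" using coprime_absorb_left by blast
  hence "q = 1" using q by simp
  thus ?thesis using x by simp
qed

text \<open>If \<open>\<lambda>\<^sup>3 = m\<lambda>\<^sup>2 + 1\<close> and \<open>x = a + b\<lambda> + c\<lambda>\<^sup>2\<close>, the three arguments of \<open>det3\<close>
  are the coordinates of \<open>x\<close>, \<open>x\<lambda>\<close>, \<open>x\<lambda>\<^sup>2\<close>; so this is the norm of \<open>x\<close>.\<close>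
definition norm_form :: "real \<Rightarrow> real \<Rightarrow> real \<Rightarrow> real \<Rightarrow> real" where
  "norm_form m a b c = det3 (a, b, c) (c, a, b + c*m) (b + c*m, c, a + m*b + m^2*c)"

lemma norm_form_eq:
  "norm_form m a b c = a*(a*(a + m*b + m^2*c) - (b + c*m)*c) - c*(b*(a + m*b + m^2*c) - c*c)
     + (b + c*m)*(b*(b + c*m) - c*a)"
  unfolding norm_form_def det3_def by simp

lemma norm_form_mult:
  "norm_form m (a*d + b*g + c*e + c*g*m) (a*e + b*d + c*g) (a*g + b*e + c*d + m*(b*g + c*e) + m^2*c*g)
     = norm_form m a b c * norm_form m d e g"
  unfolding norm_form_eq by algebra

lemma int_mult_square_diff_ne_neg_one:
  fixes z :: int
  assumes "m > 0"
  shows "z * (z - int m)^2 \<noteq> -1"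
proof (cases "z \<ge> 0")
  case True
  hence "z * (z - int m)^2 \<ge> 0" by simp
  thus ?thesis by linarith
next
  case False
  have "(2::int)^2 \<le> (int m - z)^2" using assms False by (intro power_mono) auto
  hence "z * (z - int m)^2 \<le> -4"
    using False mult_right_mono[of z "-1" "(z - int m)^2"] by (simp add: power2_commute)
  thus ?thesis by simp
qed

locale cubic_root =
  fixes m :: nat and lam :: real
  assumes m_pos: "m > 0" and root: "lam ^ 3 - real m * lam ^ 2 - 1 = 0"
begin

lemma lam_cube: "lam^3 = real m * lam^2 + 1"
  using root by simp

lemma lam_bounds: "real m < lam" "lam < real m + 1"
proof -
  have eq: "lam^2 * (lam - real m) = 1"
    using root by (simp add: algebra_simps power2_eq_square power3_eq_cube)
  thus gt: "real m < lam"
    using mult_nonneg_nonpos[of "lam^2" "lam - real m"] by (cases "lam \<le> real m") auto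
  have "lam^2 > 1" using gt m_pos less_1_mult[of lam lam] by (simp add: power2_eq_square)
  thus "lam < real m + 1"
    using eq mult_left_mono[of 1 "lam - real m" "lam^2"] by (cases "lam < real m + 1") auto
qed

lemma one_less_lam: "1 < lam"
  using lam_bounds m_pos by linarith

lemma lam_not_rat: "lam \<notin> \<rat>"
proof
  assume "lam \<in> \<rat>"
  hence "lam \<in> \<int>" using rational_root_of_monic_int_cubic[of lam "- int m" 0 "-1"] root by simp
  then obtain z where z: "lam = of_int z" by (auto elim: Ints_cases)
  hence "int m < z" "z < int m + 1" using lam_bounds by linarith+
  thus False by linarith
qed

text \<open>Reducing \<open>\<lambda>\<^sup>3\<close> modulo such a relation either expresses \<open>\<lambda>\<close> rationally or makes
  \<open>p\<close> a rational, hence integral, root of \<open>x(x - m)\<^sup>2 + 1\<close>.\<close>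
lemma lam_not_quadratic:
  assumes "p \<in> \<rat>" "q \<in> \<rat>"
  shows "lam^2 \<noteq> p * lam + q"
proof
  assume sq: "lam^2 = p * lam + q"
  have "lam^3 = lam * lam^2" by (simp add: power3_eq_cube power2_eq_square)
  also have "\<dots> = lam * (p * lam + q)" by (simp only: sq)
  also have "\<dots> = p * lam^2 + q * lam" by (simp add: algebra_simps power2_eq_square)
  also have "\<dots> = (p^2 + q) * lam + p * q" by (simp only: sq) (simp add: algebra_simps power2_eq_square)
  finally have "(p^2 + q) * lam + p * q = real m * p * lam + real m * q + 1"
    by (simp only: lam_cube sq) (simp add: algebra_simps)
  hence e: "(p^2 + q - real m * p) * lam = real m * q + 1 - p * q" by (simp add: algebra_simps)
  show False
  proof (cases "p^2 + q - real m * p = 0")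
    case False
    hence "lam = (real m * q + 1 - p * q) / (p^2 + q - real m * p)" using e by (simp add: field_simps)
    thus False using assms lam_not_rat by simp
  next
    case True
    hence q: "q = real m * p - p^2" by simp
    hence "p * q - real m * q - 1 = 0" using e True by simp
    hence p_root: "p * (p - real m)^2 = -1"
      unfolding q by (simp add: algebra_simps power2_eq_square)
    hence "p^3 + of_int (- 2 * int m) * p^2 + of_int (int m ^ 2) * p + of_int 1 = 0"
      by (simp add: algebra_simps power2_eq_square power3_eq_cube)
    hence "p \<in> \<int>" using rational_root_of_monic_int_cubic assms by blast
    then obtain z where "p = of_int z" by (auto elim: Ints_cases)
    hence "(of_int (z * (z - int m)^2) :: real) = of_int (-1)" using p_root by simp
    hence "z * (z - int m)^2 = -1" by (simp only: of_int_eq_iff)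
    thus False using int_mult_square_diff_ne_neg_one m_pos by blast
  qed
qed

lemma lam_powers_independent:
  assumes "a \<in> \<rat>" "b \<in> \<rat>" "c \<in> \<rat>" "a + b*lam + c*lam^2 = 0"
  shows "a = 0 \<and> b = 0 \<and> c = 0"
proof (cases "c = 0")
  case c: True
  show ?thesis
  proof (cases "b = 0")
    case True
    thus ?thesis using c assms by simp
  next
    case False
    hence "lam = - a / b" using assms c by (simp add: field_simps)
    thus ?thesis using assms lam_not_rat by simp
  qed
next
  case False
  hence "lam^2 = (- b / c) * lam + (- a / c)" using assms(4) by (simp add: field_simps)
  moreover have "- b / c \<in> \<rat>" "- a / c \<in> \<rat>" using assms by auto
  ultimately show ?thesis using lam_not_quadratic by blast
qed

definition elem :: "real \<Rightarrow> real \<Rightarrow> real \<Rightarrow> real" where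
  "elem a b c = a + b*lam + c*lam^2"

lemma elem_mult:
  "elem a b c * elem d e g = elem (a*d + b*g + c*e + c*g*real m) (a*e + b*d + c*g)
     (a*g + b*e + c*d + real m*(b*g + c*e) + (real m)^2*c*g)"
  using lam_cube unfolding elem_def by algebra

lemma coords_elem:
  assumes "a \<in> \<rat>" "b \<in> \<rat>" "c \<in> \<rat>"
  shows "coords lam (elem a b c) = (a, b, c)"
  unfolding coords_def
proof (rule the_equality)
  fix t assume "case t of (a', b', c') \<Rightarrow> a' \<in> \<rat> \<and> b' \<in> \<rat> \<and> c' \<in> \<rat> \<and> elem a b c = a' + b'*lam + c'*lam\<^sup>2"
  then obtain a' b' c' where t: "t = (a', b', c')"
    and h: "a' \<in> \<rat>" "b' \<in> \<rat>" "c' \<in> \<rat>" "elem a b c = a' + b'*lam + c'*lam\<^sup>2"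
    by (cases t) auto
  have "(a - a') + (b - b')*lam + (c - c')*lam^2 = 0" using h(4) unfolding elem_def by (simp add: algebra_simps)
  hence "a - a' = 0 \<and> b - b' = 0 \<and> c - c' = 0"
    using assms h by (intro lam_powers_independent) auto
  thus "t = (a, b, c)" using t by simp
qed (use assms in \<open>simp add: elem_def\<close>)

lemma field_norm_elem:
  assumes "a \<in> \<rat>" "b \<in> \<rat>" "c \<in> \<rat>"
  shows "field_norm lam (elem a b c) = norm_form (real m) a b c"
proof -
  have "elem a b c * lam = elem c a (b + c*real m)"
    using elem_mult[of a b c 0 1 0] by (simp add: elem_def)
  moreover have "elem a b c * lam^2 = elem (b + c*real m) c (a + real m*b + (real m)^2*c)"
    using elem_mult[of a b c 0 0 1] by (simp add: elem_def algebra_simps)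
  ultimately show ?thesis
    using assms unfolding field_norm_def norm_form_def by (simp add: coords_elem)
qed

lemma elem_in_cubic_field: "a \<in> \<rat> \<Longrightarrow> b \<in> \<rat> \<Longrightarrow> c \<in> \<rat> \<Longrightarrow> elem a b c \<in> cubic_field lam"
  unfolding cubic_field_def elem_def by blast

lemma cubic_field_cases:
  assumes "x \<in> cubic_field lam"
  obtains a b c where "a \<in> \<rat>" "b \<in> \<rat>" "c \<in> \<rat>" "x = elem a b c"
  using assms unfolding cubic_field_def elem_def by blast

lemma cubic_field_add:
  assumes "x \<in> cubic_field lam" "y \<in> cubic_field lam"
  shows "x + y \<in> cubic_field lam"
proof -
  obtain a b c d e g where "a \<in> \<rat>" "b \<in> \<rat>" "c \<in> \<rat>" "x = elem a b c"
    and "d \<in> \<rat>" "e \<in> \<rat>" "g \<in> \<rat>" "y = elem d e g"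
    using assms by (metis cubic_field_cases)
  thus ?thesis using elem_in_cubic_field[of "a + d" "b + e" "c + g"] by (simp add: elem_def algebra_simps)
qed

lemma cubic_field_mult_and_norm:
  assumes "x \<in> cubic_field lam" "y \<in> cubic_field lam"
  shows "x * y \<in> cubic_field lam" "field_norm lam (x * y) = field_norm lam x * field_norm lam y"
proof -
  obtain a b c d e g where abc: "a \<in> \<rat>" "b \<in> \<rat>" "c \<in> \<rat>" "x = elem a b c"
    and deg: "d \<in> \<rat>" "e \<in> \<rat>" "g \<in> \<rat>" "y = elem d e g"
    using assms by (metis cubic_field_cases)
  show "x * y \<in> cubic_field lam" "field_norm lam (x * y) = field_norm lam x * field_norm lam y"
    unfolding abc(4) deg(4) elem_mult using abc deg
    by (simp_all add: elem_in_cubic_field field_norm_elem norm_form_mult)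
qed

lemmas cubic_field_mult = cubic_field_mult_and_norm(1)
lemmas field_norm_mult = cubic_field_mult_and_norm(2)

text \<open>With \<open>p = \<lambda> - m\<close> and \<open>q = \<lambda>\<^sup>2 - m\<lambda>\<close>, the cofactor of \<open>x\<close> is the product of the
  two complex conjugates of \<open>x\<close>, a positive definite form since \<open>p\<^sup>2 < 4q\<close>.\<close>
lemma norm_form_factorization:
  "norm_form (real m) a b c = elem a b c *
     ((a - c*(lam^2 - m*lam))^2 - (lam - m)*(b - c*(lam - m))*(a - c*(lam^2 - m*lam))
      + (lam^2 - m*lam)*(b - c*(lam - m))^2)"
  using lam_cube unfolding elem_def norm_form_eq by algebra

lemma norm_form_nonzero:
  assumes "a \<in> \<rat>" "b \<in> \<rat>" "c \<in> \<rat>" "elem a b c \<noteq> 0"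
  shows "norm_form (real m) a b c \<noteq> 0"
proof -
  define p where "p = lam - real m"
  define q where "q = lam^2 - real m * lam"
  define e where "e = b - c * p"
  define h where "h = a - c * q"
  have p: "0 < p" "p < 1" using lam_bounds unfolding p_def by auto
  have "p * p < 4 * lam * p" using p one_less_lam by (intro mult_strict_right_mono) auto
  hence disc: "4*q - p^2 > 0" unfolding q_def p_def by (simp add: algebra_simps power2_eq_square)
  have "e \<noteq> 0 \<or> h \<noteq> 0"
  proof (rule ccontr)
    assume "\<not> ?thesis"
    hence eh: "e = 0" "h = 0" by auto
    show False
    proof (cases "c = 0")
      case True
      thus False using eh assms(4) unfolding e_def h_def elem_def by simp
    next
      case False
      hence "lam = b / c + real m" using eh unfolding e_def p_def by (simp add: field_simps)
      thus False using assms lam_not_rat by simp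
    qed
  qed
  hence "(2*h - p*e)^2 + (4*q - p^2)*e^2 > 0"
    using disc by (cases "e = 0") (auto intro: add_nonneg_pos)
  hence "h^2 - p*e*h + q*e^2 > 0" by (simp add: algebra_simps power2_eq_square)
  moreover have "norm_form (real m) a b c = elem a b c * (h^2 - p*e*h + q*e^2)"
    unfolding norm_form_factorization h_def e_def p_def q_def by (simp add: algebra_simps)
  ultimately show ?thesis using assms(4) by simp
qed

lemma field_norm_nonzero:
  assumes "x \<in> cubic_field lam" "x \<noteq> 0"
  shows "field_norm lam x \<noteq> 0"
  using assms by (elim cubic_field_cases) (simp add: field_norm_elem norm_form_nonzero)

lemma cubic_field_inverse:
  assumes "x \<in> cubic_field lam" "x \<noteq> 0"
  shows "1 / x \<in> cubic_field lam"
proof -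
  obtain a b c where abc: "a \<in> \<rat>" "b \<in> \<rat>" "c \<in> \<rat>" "x = elem a b c"
    using assms(1) by (rule cubic_field_cases)
  define P where "P = norm_form (real m) a b c"
  have P: "P \<noteq> 0" using norm_form_nonzero abc assms(2) unfolding P_def by simp
  define a' where "a' = a*(a + real m*b + (real m)^2*c) - c*(b + c*real m)"
  define b' where "b' = -(b*(a + real m*b + (real m)^2*c) - c*c)"
  define c' where "c' = b*(b + c*real m) - a*c"
  have adj: "elem a b c * elem a' b' c' = P"
    using lam_cube unfolding P_def norm_form_eq elem_def a'_def b'_def c'_def by algebra
  have "1 / x = elem a' b' c' / P"
    using adj P assms(2) abc(4) by (simp add: field_simps)
  also have "\<dots> = elem (a'/P) (b'/P) (c'/P)" unfolding elem_def by (simp add: add_divide_distrib)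
  finally have "1 / x = elem (a'/P) (b'/P) (c'/P)" .
  moreover have "a'/P \<in> \<rat>" "b'/P \<in> \<rat>" "c'/P \<in> \<rat>"
    using abc unfolding a'_def b'_def c'_def P_def norm_form_eq by auto
  ultimately show ?thesis using elem_in_cubic_field by simp
qed

end

section \<open>The map in homogeneous coordinates\<close>

definition proj :: "real \<Rightarrow> real \<Rightarrow> real \<Rightarrow> real \<times> real" where
  "proj a b c = (a/(a + b + c), b/(a + b + c))"

lemma proj_scale: "t \<noteq> 0 \<Longrightarrow> proj (t*a) (t*b) (t*c) = proj a b c"
  unfolding proj_def by (simp add: distrib_left[symmetric] mult.assoc[symmetric])

lemma Tmap_proj:
  assumes "a > 0" "b > 0" "c > 0"
  shows "Tmap (0,2) (proj a b c) = proj a b (c - b)"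
    and "Tmap (2,1) (proj a b c) = proj a (b - a) c"
    and "Tmap (1,0) (proj a b c) = proj (a - c) b c"
proof -
  define s where "s = a + b + c"
  have s: "s > 0" using assms unfolding s_def by simp
  have c: "c = s - a - b" unfolding s_def by simp
  have p: "proj a b c = (a/s, b/s)" unfolding proj_def s_def ..
  have "1 - b/s = (a + c)/s" "1 - a/s = (b + c)/s" "b/s - a/s = (b - a)/s"
    "2*(a/s) + b/s - 1 = (a - c)/s" "a/s + b/s = (a + b)/s"
    using s unfolding c by (simp_all add: field_simps)
  thus "Tmap (0,2) (proj a b c) = proj a b (c - b)"
    "Tmap (2,1) (proj a b c) = proj a (b - a) c"
    "Tmap (1,0) (proj a b c) = proj (a - c) b c"
    using s assms unfolding p by (simp_all add: proj_def)
qed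

lemma tri_proj:
  assumes "a > 0" "b > 0" "c > 0"
  shows "tri (0,2) (proj a b c) \<longleftrightarrow> b \<le> c"
    and "tri (1,2) (proj a b c) \<longleftrightarrow> b \<le> a"
    and "tri (0,1) (proj a b c) \<longleftrightarrow> a \<le> c"
proof -
  define s where "s = a + b + c"
  have s: "s > 0" using assms unfolding s_def by simp
  have c: "c = s - a - b" unfolding s_def by simp
  have p: "proj a b c = (a/s, b/s)" unfolding proj_def s_def ..
  have "a/s + b/s = (a + b)/s" "a/s + 2*(b/s) - 1 = (b - c)/s" "2*(a/s) + b/s - 1 = (a - c)/s"
    using s unfolding c by (simp_all add: field_simps)
  moreover have "a + b \<le> s" unfolding s_def using assms by simp
  ultimately show "tri (0,2) (proj a b c) \<longleftrightarrow> b \<le> c" "tri (1,2) (proj a b c) \<longleftrightarrow> b \<le> a"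
    "tri (0,1) (proj a b c) \<longleftrightarrow> a \<le> c"
    using s assms unfolding p by (simp_all add: divide_le_0_iff divide_le_cancel)
qed

context cubic_root
begin

definition pair_weight :: "real \<Rightarrow> real \<Rightarrow> real \<Rightarrow> real" where
  "pair_weight r x y = x powr r * y powr r / \<bar>field_norm lam x * field_norm lam y\<bar>"

lemma pair_weight_commute: "pair_weight r x y = pair_weight r y x"
  unfolding pair_weight_def by (simp add: mult.commute)

lemma pair_weight_divide:
  assumes "x \<in> cubic_field lam" "y \<in> cubic_field lam" "s \<in> cubic_field lam" "s > 0"
  shows "pair_weight r (x/s) (y/s)
       = pair_weight r x y / (s powr r * s powr r * (field_norm lam (1/s))^2)"
proof -
  have "1/s \<in> cubic_field lam" using cubic_field_inverse assms by simp
  hence "field_norm lam (x/s) = field_norm lam x * field_norm lam (1/s)"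
    "field_norm lam (y/s) = field_norm lam y * field_norm lam (1/s)"
    using field_norm_mult assms by (metis times_divide_eq_right mult_1_right)+
  thus ?thesis unfolding pair_weight_def powr_divide
    by (simp add: abs_mult power2_eq_square field_simps)
qed

text \<open>Rescaling all three coordinates by the same element of \<open>K\<close> multiplies the three
  weights by the same positive factor, so \<open>\<epsilon>\<close> can be read off the coordinates themselves.\<close>
lemma eps_proj:
  assumes "a \<in> cubic_field lam" "b \<in> cubic_field lam" "c \<in> cubic_field lam"
    and "a > 0" "b > 0" "c > 0"
  shows "eps (field_norm lam) r (proj a b c) =
     (if pair_weight r a b \<ge> pair_weight r a c \<and> pair_weight r a b \<ge> pair_weight r b c
        then (if tri (1,2) (proj a b c) then (1,2) else (2,1))
      else if pair_weight r a c \<ge> pair_weight r b c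
        then (if tri (0,1) (proj a b c) then (0,1) else (1,0))
      else (if tri (0,2) (proj a b c) then (0,2) else (2,0)))"
proof -
  define s where "s = a + b + c"
  have s: "s > 0" "s \<in> cubic_field lam" using assms unfolding s_def by (auto intro: cubic_field_add)
  define D where "D = s powr r * s powr r * (field_norm lam (1/s))^2"
  have "D > 0"
    unfolding D_def using s field_norm_nonzero cubic_field_inverse by simp
  have w: "pair_weight r (x/s) (y/s) \<le> pair_weight r (x'/s) (y'/s) \<longleftrightarrow> pair_weight r x y \<le> pair_weight r x' y'"
    if "x \<in> cubic_field lam" "y \<in> cubic_field lam" "x' \<in> cubic_field lam" "y' \<in> cubic_field lam" for x y x' y'
    using that s \<open>D > 0\<close> pair_weight_divide[of _ _ s] by (simp add: D_def[symmetric] divide_le_cancel)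
  have c: "c = s - a - b" unfolding s_def by simp
  have "1 - a/s - b/s = c/s" using s(1) unfolding c by (simp add: field_simps)
  moreover have "proj a b c = (a/s, b/s)" unfolding proj_def s_def ..
  ultimately show ?thesis
    unfolding eps_def Let_def pair_weight_def[symmetric] using assms by (simp add: w)
qed

lemma T_K_proj:
  assumes K: "a \<in> cubic_field lam" "b \<in> cubic_field lam" "c \<in> cubic_field lam"
    and pos: "a > 0" "b > 0" "c > 0"
  shows "\<lbrakk>pair_weight r a b < pair_weight r b c; pair_weight r a c < pair_weight r b c; b \<le> c\<rbrakk>
           \<Longrightarrow> T_K (field_norm lam) r (proj a b c) = proj a b (c - b)"
    and "\<lbrakk>pair_weight r a c < pair_weight r a b; pair_weight r b c < pair_weight r a b; a < b\<rbrakk>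
           \<Longrightarrow> T_K (field_norm lam) r (proj a b c) = proj a (b - a) c"
    and "\<lbrakk>pair_weight r a b < pair_weight r a c; pair_weight r b c < pair_weight r a c; c < a\<rbrakk>
           \<Longrightarrow> T_K (field_norm lam) r (proj a b c) = proj (a - c) b c"
  unfolding T_K_def eps_proj[OF K pos] using tri_proj[OF pos] Tmap_proj[OF pos] by simp_all

end

section \<open>The periodic orbit\<close>

lemma funpow_chain:
  assumes "\<And>j. j < n \<Longrightarrow> f (g j) = g (Suc j)"
  shows "(f ^^ n) (g 0) = g n"
  using assms by (induction n) auto

context cubic_root
begin

definition orbit_coord :: "nat \<Rightarrow> real" where
  "orbit_coord j = lam^2 - real j * lam"

lemma orbit_coord_Suc: "orbit_coord j - lam = orbit_coord (Suc j)"
  unfolding orbit_coord_def by (simp add: algebra_simps)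

lemma in_cubic_field: "1 \<in> cubic_field lam" "lam \<in> cubic_field lam" "orbit_coord j \<in> cubic_field lam"
  using elem_in_cubic_field[of 1 0 0] elem_in_cubic_field[of 0 1 0] elem_in_cubic_field[of 0 "- real j" 1]
  by (simp_all add: elem_def orbit_coord_def)

lemma field_norms:
  "field_norm lam 1 = 1" "field_norm lam lam = 1"
  "field_norm lam (orbit_coord j) = 1 + (real j)^2 * (real m - real j)"
proof -
  have "field_norm lam (elem 1 0 0) = 1" "field_norm lam (elem 0 1 0) = 1"
    by (simp_all add: field_norm_elem norm_form_eq)
  moreover have "field_norm lam (elem 0 (- real j) 1) = 1 + (real j)^2 * (real m - real j)"
    by (simp add: field_norm_elem norm_form_eq) (simp add: algebra_simps power2_eq_square)
  ultimately show "field_norm lam 1 = 1" "field_norm lam lam = 1"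
    "field_norm lam (orbit_coord j) = 1 + (real j)^2 * (real m - real j)"
    by (simp_all add: elem_def orbit_coord_def)
qed

lemma orbit_coord_gt_lam: "j < m \<Longrightarrow> lam < orbit_coord j"
proof -
  assume "j < m"
  hence "lam * 1 < lam * (lam - real j)"
    using lam_bounds one_less_lam by (intro mult_strict_left_mono) linarith+
  thus ?thesis unfolding orbit_coord_def by (simp add: algebra_simps power2_eq_square)
qed

lemma field_norm_orbit_coord_pos: "j < m \<Longrightarrow> 0 < field_norm lam (orbit_coord j)"
  unfolding field_norms by (simp add: add_pos_nonneg)

lemma start_point_eq: "(1 / (1 + lam + lam^2), lam / (1 + lam + lam^2)) = proj 1 lam (orbit_coord 0)"
  unfolding proj_def orbit_coord_def by simp

lemma start_point_in_DeltaK: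
  "(1 / (1 + lam + lam^2), lam / (1 + lam + lam^2)) \<in> DeltaK (cubic_field lam)"
proof -
  define s where "s = 1 + lam + lam^2"
  have s: "s > 0" unfolding s_def using one_less_lam by (simp add: add_pos_nonneg)
  have "s \<in> cubic_field lam"
    using in_cubic_field elem_in_cubic_field[of 1 1 1] unfolding s_def elem_def by simp
  hence K: "1/s \<in> cubic_field lam" "lam/s \<in> cubic_field lam"
    using cubic_field_inverse cubic_field_mult[OF in_cubic_field(2)] s by fastforce+
  have indep: "p = 0 \<and> q = 0 \<and> r = 0"
    if "p \<in> \<rat>" "q \<in> \<rat>" "r \<in> \<rat>" "p + q*(1/s) + r*(lam/s) = 0" for p q r
  proof -
    have "s * (p + q*(1/s) + r*(lam/s)) = 0" using that(4) by simp
    hence "p * s + q + r * lam = 0" using s by (simp add: algebra_simps)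
    hence "(p + q) + (p + r) * lam + p * lam^2 = 0" unfolding s_def by (simp add: algebra_simps)
    hence "p + q = 0 \<and> p + r = 0 \<and> p = 0" using that by (intro lam_powers_independent) auto
    thus ?thesis by simp
  qed
  have "1/s > 0" "lam/s > 0" "1/s + lam/s < 1"
    using s one_less_lam unfolding s_def by (auto simp: field_simps)
  thus ?thesis unfolding DeltaK_def s_def[symmetric] using K indep by blast
qed

context
  fixes r :: real
  assumes two_le_r: "2 \<le> r"
begin

abbreviation T :: "real \<times> real \<Rightarrow> real \<times> real" where
  "T \<equiv> T_K (field_norm lam) r"

text \<open>Since \<open>c\<^sub>j > m(m - j)\<close>, already \<open>c\<^sub>j\<^sup>2\<close> exceeds \<open>N(c\<^sub>j) = 1 + j\<^sup>2(m - j)\<close>.\<close>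
lemma field_norm_orbit_coord_less:
  assumes "j < m"
  shows "field_norm lam (orbit_coord j) < orbit_coord j powr r"
proof -
  define d where "d = real m - real j"
  have d: "d \<ge> 1" using assms unfolding d_def by linarith
  have "real m * d < lam * (lam - real j)"
    using lam_bounds d unfolding d_def by (intro mult_strict_mono) auto
  hence c_gt: "real m * d < orbit_coord j" unfolding orbit_coord_def by (simp add: algebra_simps power2_eq_square)
  have md: "real j + 1 \<le> real m" using assms by linarith
  have "(real j + 1)^2 * d = (real j)^2 * d + (2 * real j + 1) * d"
    by (simp add: algebra_simps power2_eq_square)
  moreover have "1 \<le> (2 * real j + 1) * d" using d mult_mono[of 1 "2 * real j + 1" 1 d] by simp
  ultimately have "1 + (real j)^2 * d \<le> (real j + 1)^2 * d" by simp
  also have "\<dots> \<le> (real m)^2 * (d * d)"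
    using d md by (intro mult_mono power_mono) auto
  also have "\<dots> = (real m * d)^2" by (simp add: power2_eq_square)
  also have "\<dots> < (orbit_coord j)^2"
    using c_gt d m_pos by (intro power_strict_mono) auto
  also have "\<dots> \<le> orbit_coord j powr r"
  proof -
    have "1 \<le> orbit_coord j" using c_gt d m_pos mult_mono[of 1 "real m" 1 d] by simp
    thus ?thesis using powr_mono[of 2 r "orbit_coord j"] two_le_r by (simp add: powr_numeral)
  qed
  finally show ?thesis unfolding field_norms d_def .
qed

lemma orbit_weights:
  assumes "j < m"
  shows "pair_weight r 1 lam < pair_weight r lam (orbit_coord j)"
    and "pair_weight r 1 (orbit_coord j) < pair_weight r lam (orbit_coord j)"
proof -
  define L where "L = lam powr r"
  define Q where "Q = orbit_coord j powr r / field_norm lam (orbit_coord j)"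
  have n: "0 < field_norm lam (orbit_coord j)" using field_norm_orbit_coord_pos[OF assms] .
  have "lam powr 0 < lam powr r" using one_less_lam two_le_r by (intro powr_less_mono) auto
  hence L: "L > 1" unfolding L_def using one_less_lam by simp
  have Q: "Q > 1" unfolding Q_def using n field_norm_orbit_coord_less[OF assms] by simp
  have "pair_weight r 1 lam = L" "pair_weight r 1 (orbit_coord j) = Q" "pair_weight r lam (orbit_coord j) = L * Q"
    unfolding pair_weight_def L_def Q_def field_norms(1,2) using n by simp_all
  thus "pair_weight r 1 lam < pair_weight r lam (orbit_coord j)"
    "pair_weight r 1 (orbit_coord j) < pair_weight r lam (orbit_coord j)"
    using L Q by (simp_all add: one_less_mult)
qed

lemma orbit_steps:
  assumes "j < m"
  shows "T (proj 1 lam (orbit_coord j)) = proj 1 lam (orbit_coord (Suc j))"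
    and "T (proj lam (orbit_coord j) 1) = proj lam (orbit_coord (Suc j)) 1"
    and "T (proj (orbit_coord j) 1 lam) = proj (orbit_coord (Suc j)) 1 lam"
proof -
  have c: "lam < orbit_coord j" "0 < orbit_coord j" "0 < lam"
    using orbit_coord_gt_lam[OF assms] one_less_lam by auto
  note w = orbit_weights[OF assms] pair_weight_commute
  show "T (proj 1 lam (orbit_coord j)) = proj 1 lam (orbit_coord (Suc j))"
    using T_K_proj(1)[OF in_cubic_field] c w by (simp add: orbit_coord_Suc)
  show "T (proj lam (orbit_coord j) 1) = proj lam (orbit_coord (Suc j)) 1"
    using T_K_proj(2)[OF in_cubic_field(2,3,1)] c w by (simp add: orbit_coord_Suc)
  show "T (proj (orbit_coord j) 1 lam) = proj (orbit_coord (Suc j)) 1 lam"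
    using T_K_proj(3)[OF in_cubic_field(3,1,2)] c w by (simp add: orbit_coord_Suc)
qed

lemma orbit_phases:
  "(T ^^ m) (proj 1 lam (orbit_coord 0)) = proj lam (orbit_coord 0) 1"
  "(T ^^ m) (proj lam (orbit_coord 0) 1) = proj (orbit_coord 0) 1 lam"
  "(T ^^ m) (proj (orbit_coord 0) 1 lam) = proj 1 lam (orbit_coord 0)"
proof -
  have last: "lam * orbit_coord m = 1" "lam * lam = orbit_coord 0"
    unfolding orbit_coord_def using lam_cube by (simp_all add: algebra_simps power2_eq_square power3_eq_cube)
  have "lam \<noteq> 0" using one_less_lam by simp
  hence rescale: "proj 1 lam (orbit_coord m) = proj lam (orbit_coord 0) 1"
    "proj lam (orbit_coord m) 1 = proj (orbit_coord 0) 1 lam"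
    "proj (orbit_coord m) 1 lam = proj 1 lam (orbit_coord 0)"
    using proj_scale[of lam 1 lam "orbit_coord m"] proj_scale[of lam lam "orbit_coord m" 1]
      proj_scale[of lam "orbit_coord m" 1 lam] last by simp_all
  moreover have "(T ^^ m) (proj 1 lam (orbit_coord 0)) = proj 1 lam (orbit_coord m)"
    by (rule funpow_chain[where g = "\<lambda>j. proj 1 lam (orbit_coord j)"]) (simp add: orbit_steps)
  moreover have "(T ^^ m) (proj lam (orbit_coord 0) 1) = proj lam (orbit_coord m) 1"
    by (rule funpow_chain[where g = "\<lambda>j. proj lam (orbit_coord j) 1"]) (simp add: orbit_steps)
  moreover have "(T ^^ m) (proj (orbit_coord 0) 1 lam) = proj (orbit_coord m) 1 lam"
    by (rule funpow_chain[where g = "\<lambda>j. proj (orbit_coord j) 1 lam"]) (simp add: orbit_steps)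
  ultimately show "(T ^^ m) (proj 1 lam (orbit_coord 0)) = proj lam (orbit_coord 0) 1"
    "(T ^^ m) (proj lam (orbit_coord 0) 1) = proj (orbit_coord 0) 1 lam"
    "(T ^^ m) (proj (orbit_coord 0) 1 lam) = proj 1 lam (orbit_coord 0)"
    by simp_all
qed

lemma start_point_period: "(T ^^ (3*m)) (proj 1 lam (orbit_coord 0)) = proj 1 lam (orbit_coord 0)"
  by (simp add: numeral_3_eq_3 funpow_add orbit_phases)

end

end

theorem theorem2p9:
  fixes m :: nat and lam :: real
  assumes "m > 0"
    and "lam ^ 3 - real m * lam ^ 2 - 1 = 0"
  shows "let K = cubic_field lam;
             T = T_K (field_norm lam) (5/2);
             p = (1 / (1 + lam + lam^2), lam / (1 + lam + lam^2))
         in p \<in> DeltaK K \<and>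
            (\<exists>m1 n1. m1 > 0 \<and> n1 > 0 \<and> m1 \<noteq> n1 \<and> (T ^^ m1) p = (T ^^ n1) p)"
proof -
  interpret cubic_root m lam using assms by unfold_locales
  let ?T = "T_K (field_norm lam) (5/2)"
  let ?p = "(1 / (1 + lam + lam^2), lam / (1 + lam + lam^2))"
  have "(?T ^^ (3*m)) ?p = ?p"
    unfolding start_point_eq by (rule start_point_period) simp
  hence "(?T ^^ (3*m + 3*m)) ?p = (?T ^^ (3*m)) ?p"
    by (simp only: funpow_add comp_apply)
  hence "\<exists>m1 n1. m1 > 0 \<and> n1 > 0 \<and> m1 \<noteq> n1 \<and> (?T ^^ m1) ?p = (?T ^^ n1) ?p"
    using assms(1) by (intro exI[of _ "3*m + 3*m"] exI[of _ "3*m"]) auto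
  thus ?thesis using start_point_in_DeltaK by (simp add: Let_def)
qed

end
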